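(* Let $\xi(s)=\pi^{-s/2}\Gamma(s/2)\zeta(s)$, $\chi(s)=s(s-1)\xi(s)$, $A=\pi/3-1$, and \[ \begin{aligned} Z_2(s) & = (s-2)\chi(2s) \Bigl[ (As + 3)(s-1)^2\chi(s+2) - 2(s-1)(s-3)\chi(s+1) - (s+2)(s-3)\chi(s) \Bigr] \\ & \quad - (s+1) \chi(2s-1) \Bigl[ (As - A - 3)s^2\chi(s-2) + 2s(s+2) \, \chi(s-1) + (s+2)(s-3)\chi(s) \Bigr]. \end{aligned} \] Then $Z_2(s)$ has no zero in the half-plane $\mathrm{Re}(s)\geq 20$. *)

theory Defs
  imports "HOL-Analysis.Analysis"
begin

(* The series converges
   (absolutely) exactly for Re s > 1; the statement below only evaluates zeta at
   points with real part >= 18, where this is the Riemann zeta function. *)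
definition zeta :: "complex \<Rightarrow> complex" where
  "zeta s = (\<Sum>n. 1 / (of_nat (Suc n)) powr s)"

definition xi :: "complex \<Rightarrow> complex" where
  "xi s = (of_real pi) powr (- s / 2) * Gamma (s / 2) * zeta s"

definition chi :: "complex \<Rightarrow> complex" where
  "chi s = s * (s - 1) * xi s"

definition A_const :: complex where
  "A_const = of_real (pi / 3 - 1)"

definition Z2 :: "complex \<Rightarrow> complex" where
  "Z2 s =
     (s - 2) * chi (2 * s) *
       ((A_const * s + 3) * (s - 1)^2 * chi (s + 2)
        - 2 * (s - 1) * (s - 3) * chi (s + 1)
        - (s + 2) * (s - 3) * chi s)
   - (s + 1) * chi (2 * s - 1) *
       ((A_const * s - A_const - 3) * s^2 * chi (s - 2)
        + 2 * s * (s + 2) * chi (s - 1)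
        + (s + 2) * (s - 3) * chi s)"

end

(*
  Writing every \<chi>-value through \<Gamma> and \<zeta> and pulling out a common nonzero factor, Z2(s)
  becomes a difference of two terms.  For Re s \<ge> 20 all the \<zeta>-values lie within 1/100 of 1,
  and the Gautschi-type inequalities
    sqrt (Re z - 1/2) |\<Gamma> z| \<le> |\<Gamma> (z + 1/2)| \<le> |z| |\<Gamma> z| / sqrt (Re z)
  (from the log-convexity of \<Gamma> on the reals and Gauss's product formula) control all the
  \<Gamma>-quotients.  The first term then has size about |s|^5 |A s + 3| |\<Gamma>(s/2)| |\<Gamma>(s - 1/2)|,
  while the second is smaller by a factor of order 1/|s|, so they cannot cancel.
*)

theory Submission
  imports Defs
begin

lemma Re_pos_not_nonpos_Ints: "Re (z::complex) > 0 \<Longrightarrow> z \<notin> \<int>\<^sub>\<le>\<^sub>0"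
  by (auto elim!: nonpos_Ints_cases)

lemma Gamma_half_shift_real_ge:
  fixes x :: real
  assumes x: "x > 1/2"
  shows "sqrt (x - 1/2) * Gamma x \<le> Gamma (x + 1/2)"
proof -
  have "ln (Gamma ((1 - 1/2) *\<^sub>R (x - 1/2) + (1/2) *\<^sub>R (x + 1/2)))
      \<le> (1 - 1/2) * ln (Gamma (x - 1/2)) + 1/2 * ln (Gamma (x + 1/2))"
    using convex_onD[OF log_convex_Gamma_real, of "1/2" "x - 1/2" "x + 1/2"] x by simp
  hence "2 * ln (Gamma x) \<le> ln (Gamma (x - 1/2)) + ln (Gamma (x + 1/2))"
    by (simp add: field_simps)
  moreover have pos: "Gamma x > 0" "Gamma (x - 1/2) > 0" "Gamma (x + 1/2) > 0"
    using x by auto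
  ultimately have "ln (Gamma x ^ 2) \<le> ln (Gamma (x - 1/2) * Gamma (x + 1/2))"
    by (simp add: ln_mult ln_realpow)
  hence sq: "Gamma x ^ 2 \<le> Gamma (x - 1/2) * Gamma (x + 1/2)"
    using pos by simp
  have "x - 1/2 \<notin> \<int>\<^sub>\<le>\<^sub>0"
    using x by (auto elim!: nonpos_Ints_cases)
  hence rec: "Gamma (x + 1/2) = (x - 1/2) * Gamma (x - 1/2)"
    using Gamma_plus1[of "x - 1/2"] by (simp add: add.commute)
  have "(sqrt (x - 1/2) * Gamma x) ^ 2 = (x - 1/2) * Gamma x ^ 2"
    using x by (simp add: power_mult_distrib)
  also have "\<dots> \<le> (x - 1/2) * (Gamma (x - 1/2) * Gamma (x + 1/2))"
    using sq x by (intro mult_left_mono) simp_all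
  also have "\<dots> = Gamma (x + 1/2) ^ 2"
    unfolding rec power2_eq_square by (simp only: mult.assoc)
  finally show ?thesis
    by (rule power2_le_imp_le) (use pos in simp)
qed

text \<open>Both quotients are limits of the finite products in Gauss's formula, which are compared
  factor by factor.\<close>

lemma norm_Gamma_shift_ratio_mono:
  fixes z z' :: complex and a :: real
  assumes z: "Re z > 0" and z': "Re z' > 0" and a: "a > 0"
    and factors: "\<And>k::nat. norm (z' + of_nat k) * norm (z + of_real a + of_nat k)
                    \<le> norm (z + of_nat k) * norm (z' + of_real a + of_nat k)"
  shows "norm (Gamma (z' + of_real a) / Gamma z') \<le> norm (Gamma (z + of_real a) / Gamma z)"
proof -
  define f :: "complex \<Rightarrow> nat \<Rightarrow> complex"
    where "f w n = Gamma_series (w + of_real a) n / Gamma_series w n" for w n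
  have lim: "f w \<longlonglongrightarrow> Gamma (w + of_real a) / Gamma w" if "Re w > 0" for w
    unfolding f_def using that
    by (intro tendsto_divide Gamma_series_LIMSEQ) (auto simp: Gamma_eq_zero_iff Re_pos_not_nonpos_Ints)
  have f_eq: "f w n = exp (of_real a * of_real (ln (of_nat n)))
      * (pochhammer w (n+1) / pochhammer (w + of_real a) (n+1))" if "Re w > 0" for w n
  proof -
    have "pochhammer u m \<noteq> 0" if "Re u > 0" for u :: complex and m
      using that by (auto simp: pochhammer_eq_0_iff)
    hence "pochhammer w m \<noteq> 0" "pochhammer (w + of_real a) m \<noteq> 0" for m
      using that a by simp_all
    thus ?thesis
      unfolding f_def Gamma_series_def by (simp add: field_simps distrib_right exp_add)
  qed
  have norm_quot: "norm (pochhammer w m / pochhammer (w + of_real a) m)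
      = (\<Prod>k<m. norm (w + of_nat k)) / (\<Prod>k<m. norm (w + of_real a + of_nat k))"
    for w :: complex and m
    by (simp add: pochhammer_prod norm_divide prod_norm atLeast0LessThan)
  have denom_pos: "(\<Prod>k<m. norm (w + of_real a + of_nat k)) > 0" if "Re w > 0" for w m
    using that a by (intro prod_pos) (auto simp: complex_eq_iff)
  have "norm (f z' n) \<le> norm (f z n)" for n
  proof -
    have "(\<Prod>k<n+1. norm (z' + of_nat k)) * (\<Prod>k<n+1. norm (z + of_real a + of_nat k))
        \<le> (\<Prod>k<n+1. norm (z + of_nat k)) * (\<Prod>k<n+1. norm (z' + of_real a + of_nat k))"
      unfolding prod.distrib[symmetric] by (intro prod_mono conjI factors) auto
    hence "(\<Prod>k<n+1. norm (z' + of_nat k)) / (\<Prod>k<n+1. norm (z' + of_real a + of_nat k))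
        \<le> (\<Prod>k<n+1. norm (z + of_nat k)) / (\<Prod>k<n+1. norm (z + of_real a + of_nat k))"
      using denom_pos[OF z, of "n+1"] denom_pos[OF z', of "n+1"]
      by (simp add: divide_simps mult.commute)
    thus ?thesis
      unfolding f_eq[OF z] f_eq[OF z'] norm_mult norm_quot by (intro mult_left_mono) auto
  qed
  thus ?thesis
    by (intro LIMSEQ_le[OF tendsto_norm[OF lim[OF z']] tendsto_norm[OF lim[OF z]]]) auto
qed

lemma norm_Gamma_half_shift_ratio_ge:
  fixes z :: complex
  assumes z: "Re z > 1/2"
  shows "sqrt (Re z - 1/2) \<le> norm (Gamma (z + 1/2) / Gamma z)"
proof -
  define x where "x = Re z"
  have x: "x > 1/2" using z by (simp add: x_def)
  have "sqrt (x - 1/2) \<le> Gamma (x + 1/2) / Gamma x"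
    using Gamma_half_shift_real_ge[OF x] x by (simp add: field_simps)
  also have "\<dots> = norm (Gamma (complex_of_real (x + 1/2)) / Gamma (of_real x))"
    using x by (simp only: Gamma_complex_of_real norm_divide norm_of_real) simp
  \<comment> \<open>moving from \<open>Re z\<close> to \<open>z\<close> only increases the quotient\<close>
  also have "\<dots> \<le> norm (Gamma (z + of_real (1/2)) / Gamma z)"
    unfolding of_real_add
  proof (rule norm_Gamma_shift_ratio_mono)
    fix k :: nat
    define c where "c = x + real k"
    have c: "c \<ge> 0" using x by (simp add: c_def)
    have "(c * norm (z + of_real (1/2) + of_nat k))^2 = c^2 * ((c + 1/2)^2 + (Im z)^2)"
      unfolding power_mult_distrib cmod_power2 c_def x_def by (simp add: algebra_simps)
    also have "\<dots> \<le> (c^2 + (Im z)^2) * (c + 1/2)^2"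
      using mult_right_mono[OF power_mono[of c "c + 1/2" 2] zero_le_power2[of "Im z"]] c
      by (simp add: algebra_simps)
    also have "\<dots> = (norm (z + of_nat k) * (c + 1/2))^2"
      unfolding power_mult_distrib cmod_power2 c_def x_def by simp
    finally have "c * norm (z + of_real (1/2) + of_nat k) \<le> norm (z + of_nat k) * (c + 1/2)"
      by (rule power2_le_imp_le) (use c in simp)
    moreover have "complex_of_real x + of_nat k = of_real c"
      "complex_of_real x + of_real (1/2) + of_nat k = of_real (c + 1/2)"
      by (simp_all add: c_def)
    hence "norm (complex_of_real x + of_nat k) = c"
      "norm (complex_of_real x + of_real (1/2) + of_nat k) = c + 1/2"
      using c by (simp_all only: norm_of_real)
    ultimately show "norm (complex_of_real x + of_nat k) * norm (z + of_real (1/2) + of_nat k)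
        \<le> norm (z + of_nat k) * norm (complex_of_real x + of_real (1/2) + of_nat k)"
      by simp
  qed (use x z in \<open>auto simp: x_def\<close>)
  finally show ?thesis by (simp add: x_def)
qed

lemma norm_Gamma_half_shift_le:
  fixes z :: complex
  assumes z: "Re z > 0"
  shows "norm (Gamma (z + 1/2)) * sqrt (Re z) \<le> norm z * norm (Gamma z)"
proof -
  have nz: "Gamma (z + 1/2) \<noteq> 0"
    using z by (simp add: Gamma_eq_zero_iff Re_pos_not_nonpos_Ints)
  have "sqrt (Re z) = sqrt (Re (z + 1/2) - 1/2)" by simp
  also have "\<dots> \<le> norm (Gamma (z + 1/2 + 1/2) / Gamma (z + 1/2))"
    using z by (intro norm_Gamma_half_shift_ratio_ge) simp
  also have "Gamma (z + 1/2 + 1/2) = z * Gamma z"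
    using Gamma_plus1[of z] z by (simp add: Re_pos_not_nonpos_Ints add.commute)
  finally show ?thesis
    using nz by (simp add: norm_divide norm_mult field_simps)
qed

lemma norm_Gamma_half_arg_shift_le:
  fixes s :: complex
  assumes s: "Re s \<ge> 18"
  shows "norm (Gamma (s/2 + 1/2)) \<le> norm s / 6 * norm (Gamma (s/2))"
proof -
  have "3 \<le> sqrt (Re (s/2))"
    using s real_sqrt_le_mono[of 9 "Re s / 2"] by simp
  hence "norm (Gamma (s/2 + 1/2)) * 3 \<le> norm (Gamma (s/2 + 1/2)) * sqrt (Re (s/2))"
    by (intro mult_left_mono) auto
  also have "\<dots> \<le> norm (s/2) * norm (Gamma (s/2))"
    using s by (intro norm_Gamma_half_shift_le) simp
  finally show ?thesis by (simp add: norm_divide)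
qed

lemma norm_Gamma_minus_half_le:
  fixes s :: complex
  assumes s: "Re s \<ge> 17"
  shows "4 * norm (Gamma (s - 1/2)) \<le> norm (Gamma s)"
proof -
  have four: "4 \<le> sqrt (Re s - 1)"
    using s real_sqrt_le_mono[of 16 "Re s - 1"] by simp
  have "sqrt (Re (s - 1/2) - 1/2) \<le> norm (Gamma (s - 1/2 + 1/2) / Gamma (s - 1/2))"
    using s by (intro norm_Gamma_half_shift_ratio_ge) simp
  moreover have "Gamma (s - 1/2) \<noteq> 0"
    using s by (simp add: Gamma_eq_zero_iff Re_pos_not_nonpos_Ints)
  ultimately have "sqrt (Re s - 1) * norm (Gamma (s - 1/2)) \<le> norm (Gamma s)"
    by (simp add: norm_divide le_divide_eq)
  thus ?thesis
    using mult_right_mono[OF four norm_ge_zero] by (rule order.trans[rotated])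
qed

lemma norm_zeta_minus_1_le:
  fixes z :: complex
  assumes z: "Re z \<ge> 18"
  shows "norm (zeta z - 1) \<le> 1/100"
proof -
  define f where "f n = 1 / (of_nat (Suc n) :: complex) powr z" for n
  have norm_f: "norm (f n) = 1 / real (Suc n) powr Re z" for n
    unfolding f_def by (simp add: norm_divide norm_powr_real_powr)
  define b where "b n = 1 / 2^16 * (1 / (real n + 1)^2)" for n
  have b_sums: "b sums (1 / 2^16 * (pi^2 / 6))"
    unfolding b_def by (intro sums_mult) (use inverse_squares_sums in \<open>simp add: add.commute\<close>)
  have f_le_b: "norm (f (Suc n)) \<le> b n" for n
  proof -
    define m where "m = real n + 2"
    have m: "m \<ge> 2" by (simp add: m_def)
    have "2^16 * (real n + 1)^2 \<le> m^16 * m^2"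
      using m by (intro mult_mono power_mono) (auto simp: m_def)
    also have "\<dots> = m powr 18"
      using m by (simp add: powr_realpow flip: power_add)
    also have "\<dots> \<le> m powr Re z"
      using m z by (intro powr_mono) auto
    finally show ?thesis
      unfolding norm_f b_def using m by (simp add: m_def field_simps)
  qed
  have summable_b: "summable b" using b_sums sums_summable by blast
  have summable_tail: "summable (\<lambda>n. norm (f (Suc n)))"
    by (rule summable_comparison_test[OF _ summable_b]) (use f_le_b in auto)
  have "summable f"
    using summable_tail by (subst summable_Suc_iff[symmetric]) (rule summable_norm_cancel)
  moreover have "zeta z = suminf f" "f 0 = 1"
    by (simp_all add: zeta_def f_def[abs_def])
  ultimately have "zeta z - 1 = (\<Sum>n. f (Suc n))"
    by (simp add: suminf_split_head)
  hence "norm (zeta z - 1) \<le> (\<Sum>n. norm (f (Suc n)))"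
    using summable_norm[OF summable_tail] by simp
  also have "\<dots> \<le> (\<Sum>n. b n)"
    by (rule suminf_le) (use f_le_b summable_tail summable_b in auto)
  also have "\<dots> = 1 / 2^16 * (pi^2 / 6)"
    using b_sums sums_unique by metis
  also have "\<dots> \<le> 1/100"
    using pi_less_4 pi_gt3 mult_mono[of pi 4 pi 4] by (simp add: power2_eq_square)
  finally show ?thesis .
qed

lemma norm_zeta_bounds:
  fixes z :: complex
  assumes "Re z \<ge> 18"
  shows "norm (zeta z) \<le> 101/100" "99/100 \<le> norm (zeta z)"
  using norm_zeta_minus_1_le[OF assms] norm_triangle_ineq[of "zeta z - 1" 1]
    norm_triangle_ineq2[of 1 "1 - zeta z"]
  by (simp_all add: norm_minus_commute)

lemma norm_diff_of_real_le:
  fixes s :: complex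
  assumes "0 \<le> c" "c \<le> Re s"
  shows "norm (s - of_real c) \<le> norm s"
proof -
  have "(norm (s - of_real c))^2 \<le> (norm s)^2"
    unfolding cmod_power2 using assms by (simp add: power_mono)
  thus ?thesis by (rule power2_le_imp_le) simp
qed

lemma norm_le_norm_add_of_real:
  fixes s :: complex
  assumes "0 \<le> c" "0 \<le> Re s"
  shows "norm s \<le> norm (s + of_real c)"
proof -
  have "(norm s)^2 \<le> (norm (s + of_real c))^2"
    unfolding cmod_power2 using assms by (simp add: power_mono)
  thus ?thesis by (rule power2_le_imp_le) simp
qed

lemma norm_shift_bounds:
  fixes s :: complex
  assumes s: "Re s \<ge> 20"
  shows "19/20 * norm s \<le> norm (s - 1)" "norm (s - 1) \<le> norm s"
    "9/10 * norm s \<le> norm (s - 2)" "norm (s - 2) \<le> norm s"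
    "norm (s - 3) \<le> norm s"
    "norm s \<le> norm (s + 1)" "norm (s + 1) \<le> 21/20 * norm s"
    "norm s \<le> norm (s + 2)" "norm (s + 2) \<le> 11/10 * norm s"
proof -
  have t: "norm s \<ge> 20" using s complex_Re_le_cmod[of s] by linarith
  show "norm (s - 1) \<le> norm s" "norm (s - 2) \<le> norm s" "norm (s - 3) \<le> norm s"
    using norm_diff_of_real_le[of 1 s] norm_diff_of_real_le[of 2 s] norm_diff_of_real_le[of 3 s] s
    by simp_all
  show "norm s \<le> norm (s + 1)" "norm s \<le> norm (s + 2)"
    using norm_le_norm_add_of_real[of 1 s] norm_le_norm_add_of_real[of 2 s] s by simp_all
  show "19/20 * norm s \<le> norm (s - 1)" "9/10 * norm s \<le> norm (s - 2)"
    using norm_triangle_ineq2[of s 1] norm_triangle_ineq2[of s 2] t by simp_all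
  show "norm (s + 1) \<le> 21/20 * norm s" "norm (s + 2) \<le> 11/10 * norm s"
    using norm_triangle_ineq[of s 1] norm_triangle_ineq[of s 2] t by simp_all
qed

lemma norm_A_const_bounds:
  fixes s :: complex
  assumes s: "Re s \<ge> 20"
  shows "394/100 \<le> norm (A_const * s + 3)"
    "norm (A_const * s - A_const - 3) \<le> 254/100 * norm (A_const * s + 3)"
proof -
  have pi_bounds: "3141/1000 \<le> pi" "pi \<le> 315/100" using pi_approx by auto
  have "394/100 \<le> (pi/3 - 1) * Re s + 3"
    using mult_left_mono[OF s, of "pi/3 - 1"] pi_bounds by simp
  also have "\<dots> = Re (A_const * s + 3)" by (simp add: A_const_def)
  also have "\<dots> \<le> norm (A_const * s + 3)" by (rule complex_Re_le_cmod)
  finally show a: "394/100 \<le> norm (A_const * s + 3)" .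
  have "A_const + 6 = of_real (pi/3 + 5)"
    by (simp add: A_const_def)
  hence "norm (A_const + 6) = pi/3 + 5"
    using pi_bounds by (simp only: norm_of_real)
  hence "norm (A_const * s - A_const - 3) \<le> norm (A_const * s + 3) + (pi/3 + 5)"
    using norm_triangle_ineq4[of "A_const * s + 3" "A_const + 6"] by (simp add: algebra_simps)
  thus "norm (A_const * s - A_const - 3) \<le> 254/100 * norm (A_const * s + 3)"
    using a pi_bounds by simp
qed

lemma sqrt_pi_le: "sqrt pi \<le> 178/100"
proof -
  have "sqrt pi \<le> sqrt ((178/100)^2)"
    using pi_approx by (intro real_sqrt_le_mono) (simp add: power2_eq_square)
  thus ?thesis by simp
qed

lemma of_real_powr_add_half_nat:
  fixes x :: real and w :: complex
  assumes "x > 0"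
  shows "of_real x powr (w + of_nat j / 2) = of_real x powr w * of_real (sqrt x) ^ j"
proof (induction j)
  case (Suc j)
  have "of_real x powr (w + of_nat (Suc j) / 2) = of_real x powr (w + of_nat j / 2) * of_real x powr (1/2)"
    by (simp add: field_simps flip: powr_add)
  also have "(complex_of_real x) powr (1/2) = of_real (sqrt x)"
    using powr_of_real[of x "1/2"] assms by (simp add: powr_half_sqrt)
  finally show ?case using Suc.IH by simp
qed simp

text \<open>The two brackets of \<open>Z2\<close>, with every \<open>chi\<close> written through \<open>Gamma\<close> and
  \<open>zeta\<close> and the common factor of \<open>Z2_factorization\<close> removed.\<close>

definition Z2_bracket_up :: "complex \<Rightarrow> complex" where
  "Z2_bracket_up s =
     (A_const * s + 3) * (s - 1) * (s + 2) * (s + 1) * Gamma (s/2) * zeta (s + 2) / 2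
     - 2 * (s - 3) * (s + 1) * of_real (sqrt pi) * Gamma (s/2 + 1/2) * zeta (s + 1)
     - (s + 2) * (s - 3) * of_real (sqrt pi) ^ 2 * Gamma (s/2) * zeta s"

definition Z2_bracket_down :: "complex \<Rightarrow> complex" where
  "Z2_bracket_down s =
     2 * (A_const * s - A_const - 3) * s * (s - 3) * of_real (sqrt pi) ^ 2 * Gamma (s/2) * zeta (s - 2)
     + 4 * (s + 2) * (s - 2) * of_real (sqrt pi) * Gamma (s/2 + 1/2) * zeta (s - 1)
     + (s + 2) * (s - 3) * (s - 1) * Gamma (s/2) * zeta s"

text \<open>\<open>P\<close> is the smallest power of \<open>pi\<close> occurring in \<open>Z2\<close>; every other one is \<open>P\<close> or
  \<open>P\<^sup>2\<close> times a power of \<open>sqrt pi\<close>.\<close>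

lemma Z2_factorization:
  fixes s :: complex
  assumes s: "Re s > 2"
  defines "P \<equiv> of_real pi powr (- (s + 2) / 2)" and "q \<equiv> complex_of_real (sqrt pi)"
  shows "Z2 s = 2 * s * (s - 1) * (2 * s - 1) * P ^ 3 * q ^ 4 *
    (s * (s - 2) * Gamma s * zeta (2 * s) * Z2_bracket_up s
     - (s + 1) * Gamma (s - 1/2) * zeta (2 * s - 1) * q ^ 3 * Z2_bracket_down s)"
proof -
  have pi_powr: "of_real pi powr (- (s + 2) / 2 + of_nat j / 2) = P * q ^ j" for j
    unfolding P_def q_def by (rule of_real_powr_add_half_nat) simp
  have "of_real pi powr (- (s + 2)) = P ^ 2"
    unfolding P_def power2_eq_square by (simp flip: powr_add)
  hence pi_powr2: "of_real pi powr (- (s + 2) + of_nat j / 2) = P ^ 2 * q ^ j" for j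
    unfolding q_def by (simp add: of_real_powr_add_half_nat)
  have exponents:
    "- (s + 1) / 2 = - (s + 2) / 2 + of_nat 1 / 2" "- s / 2 = - (s + 2) / 2 + of_nat 2 / 2"
    "- (s - 1) / 2 = - (s + 2) / 2 + of_nat 3 / 2" "- (s - 2) / 2 = - (s + 2) / 2 + of_nat 4 / 2"
    "- (2 * s) / 2 = - (s + 2) + of_nat 4 / 2" "- (2 * s - 1) / 2 = - (s + 2) + of_nat 5 / 2"
    by (simp_all add: field_simps)
  have chi: "chi w = w * (w - 1) * of_real pi powr (- w / 2) * Gamma (w / 2) * zeta w" for w
    unfolding chi_def xi_def by (simp add: mult_ac)
  have Gamma_succ: "Gamma (w + 1) = w * Gamma w" if "Re w > 0" for w
    using that by (intro Gamma_plus1 Re_pos_not_nonpos_Ints)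
  define g where "g = Gamma ((s - 2) / 2)"
  define h where "h = Gamma ((s - 1) / 2)"
  have Gamma_s2: "Gamma (s / 2) = (s - 2) / 2 * g"
    using Gamma_succ[of "(s - 2) / 2"] s by (simp add: g_def field_simps)
  have Gamma_args:
    "Gamma ((s + 2) / 2) = s / 2 * Gamma (s / 2)"
    "Gamma (s / 2 + 1 / 2) = (s - 1) / 2 * h" "Gamma ((s + 1) / 2) = (s - 1) / 2 * h"
    "Gamma ((2 * s) / 2) = Gamma s" "Gamma ((2 * s - 1) / 2) = Gamma (s - 1 / 2)"
    using Gamma_succ[of "s / 2"] Gamma_succ[of "(s - 1) / 2"] s
    by (simp_all add: h_def field_simps)
  show ?thesis
    unfolding Z2_def Z2_bracket_up_def Z2_bracket_down_def chi exponents pi_powr pi_powr2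
      Gamma_args Gamma_s2 g_def[symmetric] h_def[symmetric] q_def[symmetric] P_def[symmetric]
    by (simp add: field_simps) algebra
qed

lemma norm_Z2_bracket_up_ge:
  fixes s :: complex
  assumes s: "Re s \<ge> 20"
  shows "norm (A_const * s + 3) * norm (Gamma (s/2)) * norm s ^ 3 / 4 \<le> norm (Z2_bracket_up s)"
proof -
  define t a g where "t = norm s" and "a = norm (A_const * s + 3)" and "g = norm (Gamma (s/2))"
  define M N K where
    "M = (A_const * s + 3) * (s - 1) * (s + 2) * (s + 1) * Gamma (s/2) * zeta (s + 2)" and
    "N = 2 * (s - 3) * (s + 1) * of_real (sqrt pi) * Gamma (s/2 + 1/2) * zeta (s + 1)" and
    "K = (s + 2) * (s - 3) * of_real (sqrt pi) ^ 2 * Gamma (s/2) * zeta s"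
  note shifts = norm_shift_bounds[OF s, folded t_def]
  have t: "t \<ge> 20" using s complex_Re_le_cmod[of s] by (simp add: t_def)
  have a: "394/100 \<le> a" using norm_A_const_bounds[OF s] by (simp add: a_def)
  have g: "g \<ge> 0" by (simp add: g_def)
  have h: "norm (Gamma (s/2 + 1/2)) \<le> t / 6 * g"
    using norm_Gamma_half_arg_shift_le s by (simp add: t_def g_def)
  have zeta: "99/100 \<le> norm (zeta (s + 2))" "norm (zeta (s + 1)) \<le> 101/100" "norm (zeta s) \<le> 101/100"
    using norm_zeta_bounds[of "s + 2"] norm_zeta_bounds[of "s + 1"] norm_zeta_bounds[of s] s
    by simp_all
  define X where "X = g * t^3"
  have pi_bounds: "sqrt pi \<le> 178/100" "pi \<le> 315/100" using sqrt_pi_le pi_approx by simp_all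
  have "a * (19/20 * t) * t * t * g * (99/100) \<le> norm M"
    unfolding M_def norm_mult a_def[symmetric] g_def[symmetric]
    by (intro mult_mono' order.refl) (use shifts t zeta g a in auto)
  hence M: "9405/10000 * (a * X) \<le> norm M"
    by (simp add: X_def power3_eq_cube mult_ac)
  have "norm N \<le> 2 * t * (21/20 * t) * (178/100) * (t / 6 * g) * (101/100)"
    unfolding N_def norm_mult
    by (intro mult_mono' order.refl) (use shifts t zeta g h pi_bounds in auto)
  hence N: "norm N \<le> 62923/100000 * X"
    by (simp add: X_def power3_eq_cube mult_ac)
  have "norm K \<le> 11/10 * t * t * (315/100) * g * (101/100)"
    unfolding K_def norm_mult norm_power g_def[symmetric]
    by (intro mult_mono' order.refl) (use shifts t zeta g pi_bounds in auto)
  hence K: "norm K \<le> 349965/100000 * (g * t^2)"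
    by (simp add: power2_eq_square mult_ac)
  have "g * t^2 * 20 \<le> g * t^2 * t"
    using g t by (intro mult_left_mono) auto
  hence t3: "20 * (g * t^2) \<le> X"
    by (simp add: X_def power2_eq_square power3_eq_cube mult_ac)
  have "norm M / 2 = norm (Z2_bracket_up s + N + K)"
    unfolding Z2_bracket_up_def M_def N_def K_def by (simp add: norm_divide)
  hence "norm M / 2 \<le> norm (Z2_bracket_up s) + norm N + norm K"
    using norm_triangle_ineq[of "Z2_bracket_up s + N" K] norm_triangle_ineq[of "Z2_bracket_up s" N]
    by linarith
  moreover have "X \<ge> 0" using g t by (simp add: X_def)
  moreover have "394/100 * X \<le> a * X"
    using a g t by (intro mult_right_mono) (simp_all add: X_def)
  ultimately have "a * X / 4 \<le> norm (Z2_bracket_up s)"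
    using M N K t3 \<open>X \<ge> 0\<close> by linarith
  thus ?thesis by (simp add: X_def a_def g_def t_def mult_ac)
qed

lemma norm_Z2_bracket_down_le:
  fixes s :: complex
  assumes s: "Re s \<ge> 20"
  shows "norm (Z2_bracket_down s) \<le> 3/2 * (norm (A_const * s + 3) * norm (Gamma (s/2)) * norm s ^ 3)"
proof -
  define t a g where "t = norm s" and "a = norm (A_const * s + 3)" and "g = norm (Gamma (s/2))"
  define D1 D2 D3 where
    "D1 = 2 * (A_const * s - A_const - 3) * s * (s - 3) * of_real (sqrt pi) ^ 2 * Gamma (s/2) * zeta (s - 2)" and
    "D2 = 4 * (s + 2) * (s - 2) * of_real (sqrt pi) * Gamma (s/2 + 1/2) * zeta (s - 1)" and
    "D3 = (s + 2) * (s - 3) * (s - 1) * Gamma (s/2) * zeta s"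
  note shifts = norm_shift_bounds[OF s, folded t_def]
  have t: "t \<ge> 20" using s complex_Re_le_cmod[of s] by (simp add: t_def)
  have a: "394/100 \<le> a" "norm (A_const * s - A_const - 3) \<le> 254/100 * a"
    using norm_A_const_bounds[OF s] by (simp_all add: a_def)
  have g: "g \<ge> 0" by (simp add: g_def)
  have h: "norm (Gamma (s/2 + 1/2)) \<le> t / 6 * g"
    using norm_Gamma_half_arg_shift_le s by (simp add: t_def g_def)
  have zeta: "norm (zeta (s - 2)) \<le> 101/100" "norm (zeta (s - 1)) \<le> 101/100" "norm (zeta s) \<le> 101/100"
    using norm_zeta_bounds[of "s - 2"] norm_zeta_bounds[of "s - 1"] norm_zeta_bounds[of s] s
    by simp_all
  have pi_bounds: "sqrt pi \<le> 178/100" "pi \<le> 315/100" using sqrt_pi_le pi_approx by simp_all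
  define X where "X = g * t^3"
  have X_nonneg: "X \<ge> 0" using g t by (simp add: X_def)
  have "norm D1 \<le> 2 * (254/100 * a) * t * t * (315/100) * g * (101/100)"
    unfolding D1_def norm_mult norm_power g_def[symmetric] t_def[symmetric]
    by (intro mult_mono' order.refl) (use shifts t zeta g a pi_bounds in auto)
  hence D1: "norm D1 \<le> 1616202/100000 * (a * (g * t^2))"
    by (simp add: power2_eq_square mult_ac)
  have "norm D2 \<le> 4 * (11/10 * t) * t * (178/100) * (t / 6 * g) * (101/100)"
    unfolding D2_def norm_mult
    by (intro mult_mono' order.refl) (use shifts t zeta g h pi_bounds in auto)
  hence "norm D2 \<le> 98879/75000 * X"
    by (simp add: X_def power3_eq_cube mult_ac)
  hence D2: "norm D2 \<le> 13184/10000 * X"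
    using X_nonneg by linarith
  have "norm D3 \<le> 11/10 * t * t * t * g * (101/100)"
    unfolding D3_def norm_mult g_def[symmetric]
    by (intro mult_mono' order.refl) (use shifts t zeta g in auto)
  hence D3: "norm D3 \<le> 1111/1000 * X"
    by (simp add: X_def power3_eq_cube mult_ac)
  have "a * (g * t^2) * 20 \<le> a * (g * t^2) * t"
    using a g t by (intro mult_left_mono) auto
  hence t3: "20 * (a * (g * t^2)) \<le> a * X"
    by (simp add: X_def power2_eq_square power3_eq_cube mult_ac)
  have "norm (Z2_bracket_down s) \<le> norm D1 + norm D2 + norm D3"
    unfolding Z2_bracket_down_def D1_def D2_def D3_def
    by (rule norm_triangle_le) (rule add_mono[OF norm_triangle_ineq order.refl])
  moreover have "394/100 * X \<le> a * X"
    using a X_nonneg by (intro mult_right_mono) simp_all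
  ultimately have "norm (Z2_bracket_down s) \<le> 3/2 * (a * X)"
    using D1 D2 D3 t3 X_nonneg by linarith
  thus ?thesis by (simp add: X_def a_def g_def t_def mult_ac)
qed

lemma Z2_first_term_dominates:
  fixes s :: complex
  assumes s: "Re s \<ge> 20"
  shows "norm ((s + 1) * Gamma (s - 1/2) * zeta (2 * s - 1) * of_real (sqrt pi) ^ 3 * Z2_bracket_down s)
    < norm (s * (s - 2) * Gamma s * zeta (2 * s) * Z2_bracket_up s)"
proof -
  define t k Y where "t = norm s" and "k = norm (Gamma (s - 1/2))"
    and "Y = norm (A_const * s + 3) * norm (Gamma (s/2)) * norm s ^ 3"
  define W where "W = k * Y * t"
  note shifts = norm_shift_bounds[OF s, folded t_def]
  have t: "t \<ge> 20" using s complex_Re_le_cmod[of s] by (simp add: t_def)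
  have "Gamma (s - 1/2) \<noteq> 0" "Gamma (s/2) \<noteq> 0"
    using s by (simp_all add: Gamma_eq_zero_iff Re_pos_not_nonpos_Ints)
  moreover have "A_const * s + 3 \<noteq> 0"
    using norm_A_const_bounds(1)[OF s] by auto
  ultimately have W_pos: "W > 0"
    using t by (auto simp: W_def k_def Y_def t_def intro!: mult_pos_pos)
  have "sqrt pi ^ 3 = pi * sqrt pi"
    by (simp add: power3_eq_cube)
  also have "\<dots> \<le> 315/100 * (178/100)"
    using pi_approx sqrt_pi_le by (intro mult_mono) auto
  finally have sqrt_pi_cube: "sqrt pi ^ 3 \<le> 315/100 * (178/100)" .
  have "norm ((s + 1) * Gamma (s - 1/2) * zeta (2 * s - 1) * of_real (sqrt pi) ^ 3 * Z2_bracket_down s)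
      \<le> 21/20 * t * k * (101/100) * (315/100 * (178/100)) * (3/2 * Y)"
    unfolding norm_mult norm_power k_def[symmetric] Y_def
    using s norm_zeta_bounds(1)[of "2 * s - 1"] norm_Z2_bracket_down_le[OF s] shifts sqrt_pi_cube
    by (intro mult_mono') (auto simp: t_def k_def)
  also have "\<dots> = 21/20 * (101/100) * (315/100 * (178/100)) * (3/2) * W"
    by (simp add: W_def mult_ac)
  also have "\<dots> < 891/1000 * (W * t)"
    using W_pos mult_left_mono[OF t, of W] by linarith
  also have "\<dots> = t * (9/10 * t) * (4 * k) * (99/100) * (Y / 4)"
    by (simp add: W_def field_simps)
  also have "\<dots> \<le> norm (s * (s - 2) * Gamma s * zeta (2 * s) * Z2_bracket_up s)"
    unfolding norm_mult t_def[symmetric]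
    using s norm_zeta_bounds(2)[of "2 * s"] norm_Gamma_minus_half_le[of s] norm_Z2_bracket_up_ge[OF s]
      shifts t
    by (intro mult_mono') (auto simp: k_def Y_def)
  finally show ?thesis .
qed

theorem proposition6p4:
  fixes s :: complex
  assumes "Re s \<ge> 20"
  shows "Z2 s \<noteq> 0"
proof -
  have "s \<noteq> 0" "s - 1 \<noteq> 0" "2 * s - 1 \<noteq> 0"
    using assms by (auto simp: complex_eq_iff)
  moreover have "complex_of_real pi powr (- (s + 2) / 2) \<noteq> 0"
    by (simp add: powr_def)
  moreover have "complex_of_real (sqrt pi) \<noteq> 0"
    by simp
  moreover have "s * (s - 2) * Gamma s * zeta (2 * s) * Z2_bracket_up s
      \<noteq> (s + 1) * Gamma (s - 1/2) * zeta (2 * s - 1) * of_real (sqrt pi) ^ 3 * Z2_bracket_down s"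
    using Z2_first_term_dominates[OF assms] by force
  ultimately show ?thesis
    using assms by (subst Z2_factorization) auto
qed

end
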